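(* Consider the multi-hop control network closed loop described in the context, with plant, graphs, scheduling (hence all path delays), the integers $n,r,m,s$ and the step amplitude $A$ fixed. There exists a polynomial $Q$ in the entries of $\mathbf d=(d_s,\dots,d_0)$ and $\mathbf w_R=(W_R(e))_{e\in E_R}$, with coefficients depending only on the fixed data, such that for every choice of $(\mathbf c,\mathbf d,\mathbf w_R,\mathbf w_O)$ for which the closed loop satisfies the deadbeat identity $$D_C(z)D_{P'}(z)+N_{C'}(z)N_{G_R}(z)N_P(z)N_{G_O}(z)=z^{l},\qquad l=m+r+1,$$ and the step response has zero steady-state error ($e(k)\to 0$), the quadratic $\ell_2$ norm of the error satisfies $$\|e\|_{\mathcal L_2}^2=\sum_{k\ge 0}e(k)^2=Q(\mathbf d,\mathbf w_R).$$
   Context: Plant: a discrete-time SISO transfer function $P(z)=\dfrac{N_P(z)}{M(z)D_{P'}(z)}$ with $N_P(z)=b_{n-1}z^{n-1}+\dots+b_0$, $D_{P'}(z)=z^r+a_{r-1}z^{r-1}+\dots+a_0$, $M(z)$ a monic polynomial, and $r+\deg M=n$. Controllability network: an acyclic directed graph $(V_R,E_R)$ with a controller node $v_c$ and an actuator node $v_u$, a weight function $W_R:E_R\to\mathbb R$, and a fixed periodic scheduling that assigns to every directed path $\rho$ from $v_c$ to $v_u$ a delay $d(\rho)\in\mathbb N$. Let $\chi_R(d)$ be the set of such paths of delay $d$, $D_R$ the finite set of delays that occur, $\bar D_R=\max D_R$, $W_R(\rho)$ the product of the weights of the edges of $\rho$, $\gamma_R(d)=\sum_{\rho\in\chi_R(d)}W_R(\rho)$,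 $N_{G_R}(z)=\sum_{d\in D_R}\gamma_R(d)z^{\bar D_R-d}$ and $G_R(z)=N_{G_R}(z)/z^{\bar D_R}$. The observability network is defined analogously (acyclic graph $(V_O,E_O)$ with paths from the sensor node to $v_c$, weights $W_O$, delay set $D_O$, $\bar D_O=\max D_O$, coefficients $\gamma_O$, $N_{G_O}(z)=\sum_{d\in D_O}\gamma_O(d)z^{\bar D_O-d}$, $G_O(z)=N_{G_O}(z)/z^{\bar D_O}$). Controller: $C(z)=M(z)z^{\bar D_R}z^{\bar D_O}C'(z)$, $C'(z)=N_{C'}(z)/D_C(z)$ with $N_{C'}(z)=d_sz^s+\dots+d_0$, $D_C(z)=(z-1)(z^m+c_{m-1}z^{m-1}+\dots+c_0)$, where $m+1=s+\deg M+\bar D_R+\bar D_O$; decision vectors $\mathbf c=(c_{m-1},\dots,c_0)$, $\mathbf d=(d_s,\dots,d_0)$, $\mathbf w_R=(W_R(e))_{e\in E_R}$, $\mathbf w_O=(W_O(e))_{e\in E_O}$. Closed loop: with reference $r(k)=A$ for $k\ge0$ (Z-transform $R(z)=Az/(z-1)$), the plant output has Z-transform $Y(z)=\dfrac{C(z)G_R(z)P(z)}{1+C(z)G_R(z)P(z)G_O(z)}R(z)$, and the error is $e(k)=y(k)-r(k)$. *)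

theory Defs
  imports "HOL-Analysis.Analysis" "HOL-Computational_Algebra.Polynomial"
          "Graph_Theory.Graph_Theory"
begin

definition cpoly :: "real poly \<Rightarrow> complex \<Rightarrow> complex" where
  "cpoly p z = poly (map_poly complex_of_real p) z"

definition net_paths :: "('a,'b) pre_digraph \<Rightarrow> 'a \<Rightarrow> 'a \<Rightarrow> 'b list set" where
  "net_paths G u v = {p. pre_digraph.apath G u p v}"

definition acyclic_net :: "('a,'b) pre_digraph \<Rightarrow> bool" where
  "acyclic_net G \<longleftrightarrow> \<not> (\<exists>p. pre_digraph.cycle G p)"

definition path_weight :: "('b \<Rightarrow> real) \<Rightarrow> 'b list \<Rightarrow> real" where
  "path_weight W p = prod_list (map W p)"

definition delay_set :: "('a,'b) pre_digraph \<Rightarrow> 'a \<Rightarrow> 'a \<Rightarrow> ('b list \<Rightarrow> nat) \<Rightarrow> nat set" where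
  "delay_set G u v dl = dl ` net_paths G u v"

definition max_delay :: "('a,'b) pre_digraph \<Rightarrow> 'a \<Rightarrow> 'a \<Rightarrow> ('b list \<Rightarrow> nat) \<Rightarrow> nat" where
  "max_delay G u v dl = Max (delay_set G u v dl)"

definition gamma_net :: "('a,'b) pre_digraph \<Rightarrow> 'a \<Rightarrow> 'a \<Rightarrow> ('b list \<Rightarrow> nat) \<Rightarrow> ('b \<Rightarrow> real) \<Rightarrow> nat \<Rightarrow> real" where
  "gamma_net G u v dl W d = (\<Sum>p\<in>{p\<in>net_paths G u v. dl p = d}. path_weight W p)"

definition NG_poly :: "('a,'b) pre_digraph \<Rightarrow> 'a \<Rightarrow> 'a \<Rightarrow> ('b list \<Rightarrow> nat) \<Rightarrow> ('b \<Rightarrow> real) \<Rightarrow> real poly" where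
  "NG_poly G u v dl W =
     (\<Sum>d\<in>delay_set G u v dl. monom (gamma_net G u v dl W d) (max_delay G u v dl - d))"

definition NC_poly :: "nat \<Rightarrow> (nat \<Rightarrow> real) \<Rightarrow> real poly" where
  "NC_poly s d = (\<Sum>i\<le>s. monom (d i) i)"

definition DC_poly :: "nat \<Rightarrow> (nat \<Rightarrow> real) \<Rightarrow> real poly" where
  "DC_poly m c = [:-1, 1:] * (monom 1 m + (\<Sum>i<m. monom (c i) i))"

definition polynomial_fun :: "'v set \<Rightarrow> (('v \<Rightarrow> real) \<Rightarrow> real) \<Rightarrow> bool" where
  "polynomial_fun V Q \<longleftrightarrow>
     (\<exists>S cf. finite S \<and> (\<forall>\<alpha>\<in>S. \<forall>v. v \<notin> V \<longrightarrow> \<alpha> v = 0) \<and>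
        (\<forall>x. Q x = (\<Sum>\<alpha>\<in>S. cf \<alpha> * (\<Prod>v\<in>V. x v ^ \<alpha> v))))"

definition has_ztransform :: "(nat \<Rightarrow> real) \<Rightarrow> (complex \<Rightarrow> complex) \<Rightarrow> bool" where
  "has_ztransform x X \<longleftrightarrow>
     (\<exists>\<rho>. \<forall>z. norm z > \<rho> \<longrightarrow> (\<lambda>k. complex_of_real (x k) / z ^ k) sums X z)"

end

theory Submission
  imports Defs
begin

text \<open>The deadbeat identity makes the characteristic polynomial of the loop equal to \<open>z^l\<close>, so
  the closed loop from reference to output is the FIR filter \<open>F(z)/z^l\<close> with
  \<open>F = z^{D_O} N_{C'} N_{G_R} N_P\<close> of degree at most \<open>l\<close>. Its step response \<open>y\<close>, recovered from
  the Z-transform by uniqueness of power series in \<open>1/z\<close>, is therefore constant from time \<open>l\<close> on;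
  zero steady-state error makes that constant \<open>A\<close>, so \<open>\<Sum>\<^sub>k e(k)^2\<close> is the finite sum
  \<open>\<Sum>\<^sub>k\<^sub><\<^sub>l (y(k) - A)^2\<close>, a polynomial in the coefficients of \<open>F\<close>, which are in turn
  polynomial in \<open>d\<close> and \<open>w_R\<close> via path weights.\<close>

lemma polynomial_fun_const: "polynomial_fun V (\<lambda>x. c)"
  unfolding polynomial_fun_def
  by (rule exI[of _ "{\<lambda>_. 0}"], rule exI[of _ "\<lambda>_. c"]) simp

lemma polynomial_fun_var:
  assumes "finite V" "v \<in> V"
  shows "polynomial_fun V (\<lambda>x. x v)"
  unfolding polynomial_fun_def
proof (intro exI[of _ "{\<lambda>u. if u = v then 1 else 0}"] exI[of _ "\<lambda>_. 1"] conjI allI ballI impI)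
  fix x :: "'a \<Rightarrow> real"
  have "(\<Prod>u\<in>V. x u ^ (if u = v then 1 else 0)) = (\<Prod>u\<in>V. if u = v then x u else 1)"
    by (intro prod.cong) auto
  also have "\<dots> = x v" using assms by (simp add: prod.delta)
  finally show "x v = (\<Sum>\<alpha>\<in>{\<lambda>u. if u = v then 1 else 0}. 1 * (\<Prod>u\<in>V. x u ^ \<alpha> u))" by simp
qed (use assms in auto)

lemma polynomial_fun_add:
  assumes "polynomial_fun V f" "polynomial_fun V g"
  shows "polynomial_fun V (\<lambda>x. f x + g x)"
proof -
  obtain S1 c1 where 1: "finite S1" "\<forall>\<alpha>\<in>S1. \<forall>v. v \<notin> V \<longrightarrow> \<alpha> v = 0"
    "\<forall>x. f x = (\<Sum>\<alpha>\<in>S1. c1 \<alpha> * (\<Prod>v\<in>V. x v ^ \<alpha> v))"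
    using assms(1) unfolding polynomial_fun_def by blast
  obtain S2 c2 where 2: "finite S2" "\<forall>\<alpha>\<in>S2. \<forall>v. v \<notin> V \<longrightarrow> \<alpha> v = 0"
    "\<forall>x. g x = (\<Sum>\<alpha>\<in>S2. c2 \<alpha> * (\<Prod>v\<in>V. x v ^ \<alpha> v))"
    using assms(2) unfolding polynomial_fun_def by blast
  define c where "c \<alpha> = (if \<alpha> \<in> S1 then c1 \<alpha> else 0) + (if \<alpha> \<in> S2 then c2 \<alpha> else 0)" for \<alpha>
  show ?thesis unfolding polynomial_fun_def
  proof (intro exI[of _ "S1 \<union> S2"] exI[of _ c] conjI allI)
    fix x :: "'a \<Rightarrow> real"
    let ?X = "\<lambda>\<alpha>. \<Prod>v\<in>V. x v ^ \<alpha> v"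
    have "(\<Sum>\<alpha>\<in>S1 \<union> S2. c \<alpha> * ?X \<alpha>) = (\<Sum>\<alpha>\<in>S1 \<union> S2. if \<alpha> \<in> S1 then c1 \<alpha> * ?X \<alpha> else 0)
       + (\<Sum>\<alpha>\<in>S1 \<union> S2. if \<alpha> \<in> S2 then c2 \<alpha> * ?X \<alpha> else 0)"
      unfolding c_def sum.distrib[symmetric] by (intro sum.cong refl) (simp add: distrib_right)
    also have "\<dots> = f x + g x"
      using 1 2 by (simp add: sum.If_cases Int_absorb1 Int_absorb2)
    finally show "f x + g x = (\<Sum>\<alpha>\<in>S1 \<union> S2. c \<alpha> * ?X \<alpha>)" by simp
  qed (use 1 2 in auto)
qed

lemma polynomial_fun_mult:
  assumes "polynomial_fun V f" "polynomial_fun V g"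
  shows "polynomial_fun V (\<lambda>x. f x * g x)"
proof -
  obtain S1 c1 where 1: "finite S1" "\<forall>\<alpha>\<in>S1. \<forall>v. v \<notin> V \<longrightarrow> \<alpha> v = 0"
    "\<forall>x. f x = (\<Sum>\<alpha>\<in>S1. c1 \<alpha> * (\<Prod>v\<in>V. x v ^ \<alpha> v))"
    using assms(1) unfolding polynomial_fun_def by blast
  obtain S2 c2 where 2: "finite S2" "\<forall>\<alpha>\<in>S2. \<forall>v. v \<notin> V \<longrightarrow> \<alpha> v = 0"
    "\<forall>x. g x = (\<Sum>\<alpha>\<in>S2. c2 \<alpha> * (\<Prod>v\<in>V. x v ^ \<alpha> v))"
    using assms(2) unfolding polynomial_fun_def by blast
  define plus where "plus = (\<lambda>(\<alpha>::'a \<Rightarrow> nat, \<beta>). (\<lambda>v. \<alpha> v + \<beta> v))"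
  define S where "S = plus ` (S1 \<times> S2)"
  define c where "c \<gamma> = (\<Sum>p\<in>{p\<in>S1 \<times> S2. plus p = \<gamma>}. c1 (fst p) * c2 (snd p))" for \<gamma>
  show ?thesis unfolding polynomial_fun_def
  proof (intro exI[of _ S] exI[of _ c] conjI allI)
    fix x :: "'a \<Rightarrow> real"
    let ?X = "\<lambda>\<alpha>. \<Prod>v\<in>V. x v ^ \<alpha> v"
    have X_plus: "?X (plus p) = ?X (fst p) * ?X (snd p)" for p
      by (cases p) (simp add: plus_def power_add prod.distrib)
    have "f x * g x = (\<Sum>p\<in>S1 \<times> S2. c1 (fst p) * c2 (snd p) * ?X (plus p))"
      using 1 2 by (simp add: sum_product sum.cartesian_product X_plus mult_ac case_prod_beta)
    also have "\<dots> = (\<Sum>\<gamma>\<in>S. \<Sum>p\<in>{p\<in>S1 \<times> S2. plus p = \<gamma>}. c1 (fst p) * c2 (snd p) * ?X (plus p))"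
      by (rule sum.group[symmetric]) (use 1 2 in \<open>auto simp: S_def\<close>)
    also have "\<dots> = (\<Sum>\<gamma>\<in>S. c \<gamma> * ?X \<gamma>)"
      unfolding c_def sum_distrib_right by (intro sum.cong refl) auto
    finally show "f x * g x = (\<Sum>\<gamma>\<in>S. c \<gamma> * ?X \<gamma>)" .
  qed (use 1 2 in \<open>auto simp: S_def plus_def\<close>)
qed

lemma polynomial_fun_diff:
  assumes "polynomial_fun V f" "polynomial_fun V g"
  shows "polynomial_fun V (\<lambda>x. f x - g x)"
proof -
  have "polynomial_fun V (\<lambda>x. f x + (-1) * g x)"
    by (intro polynomial_fun_add polynomial_fun_mult assms polynomial_fun_const)
  then show ?thesis by simp
qed

lemma polynomial_fun_If:
  assumes "polynomial_fun V f" "polynomial_fun V g"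
  shows "polynomial_fun V (\<lambda>x. if b then f x else g x)"
  using assms by (cases b) simp_all

lemma polynomial_fun_sum:
  assumes "\<And>i. i \<in> I \<Longrightarrow> polynomial_fun V (f i)"
  shows "polynomial_fun V (\<lambda>x. \<Sum>i\<in>I. f i x)"
proof (cases "finite I")
  case True
  then show ?thesis using assms
    by (induction I rule: finite_induct) (auto intro: polynomial_fun_const polynomial_fun_add)
qed (simp add: polynomial_fun_const)

lemma polynomial_fun_prod_list_var:
  assumes "finite V" "\<And>e. e \<in> set p \<Longrightarrow> h e \<in> V"
  shows "polynomial_fun V (\<lambda>x. prod_list (map (\<lambda>e. x (h e)) p))"
  using assms(2)
proof (induction p)
  case (Cons e p)
  then have "polynomial_fun V (\<lambda>x. x (h e))" by (intro polynomial_fun_var assms(1)) auto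
  with Cons show ?case by (auto intro: polynomial_fun_mult)
qed (simp add: polynomial_fun_const)

lemma polynomial_fun_coeff_mult:
  assumes "\<And>i. polynomial_fun V (\<lambda>x. coeff (p x) i)" "\<And>i. polynomial_fun V (\<lambda>x. coeff (q x) i)"
  shows "polynomial_fun V (\<lambda>x. coeff (p x * q x) i)"
  unfolding coeff_mult by (intro polynomial_fun_sum polynomial_fun_mult assms)

lemma coeff_NC_poly: "coeff (NC_poly s d) j = (if j \<le> s then d j else 0)"
  unfolding NC_poly_def by (simp add: coeff_sum coeff_monom)

lemma coeff_NG_poly: "coeff (NG_poly G u v dl W) j =
  (\<Sum>d\<in>delay_set G u v dl. if max_delay G u v dl - d = j then gamma_net G u v dl W d else 0)"
  unfolding NG_poly_def by (simp add: coeff_sum coeff_monom)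

lemma degree_NC_poly_le: "degree (NC_poly s d) \<le> s"
  by (rule degree_le) (simp add: coeff_NC_poly)

lemma degree_NG_poly_le: "degree (NG_poly G u v dl W) \<le> max_delay G u v dl"
  by (rule degree_le) (auto simp: coeff_NG_poly intro!: sum.neutral)

lemma DC_poly_nonzero: "DC_poly m c \<noteq> 0"
proof -
  have "coeff (monom 1 m + (\<Sum>i<m. monom (c i) i)) m = 1"
    by (simp add: coeff_sum coeff_monom)
  then have "monom 1 m + (\<Sum>i<m. monom (c i) i) \<noteq> 0" by (metis coeff_0 one_neq_zero)
  then show ?thesis unfolding DC_poly_def by (simp del: mult_pCons_left)
qed

lemma polynomial_fun_coeff_NC_poly:
  assumes "finite V" "\<And>i. i \<le> s \<Longrightarrow> f i \<in> V"
  shows "polynomial_fun V (\<lambda>x. coeff (NC_poly s (\<lambda>i. x (f i))) j)"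
  unfolding coeff_NC_poly using assms
  by (cases "j \<le> s") (auto intro: polynomial_fun_var polynomial_fun_const)

lemma polynomial_fun_coeff_NG_poly:
  assumes "finite V" "\<And>e. e \<in> arcs G \<Longrightarrow> f e \<in> V"
  shows "polynomial_fun V (\<lambda>x. coeff (NG_poly G u v dl (\<lambda>e. x (f e))) j)"
  unfolding coeff_NG_poly gamma_net_def path_weight_def
proof (intro polynomial_fun_sum polynomial_fun_If polynomial_fun_const
    polynomial_fun_prod_list_var[OF assms(1)])
  fix d p e assume "p \<in> {p \<in> net_paths G u v. dl p = d}" "e \<in> set p"
  then have "e \<in> arcs G"
    by (auto simp: net_paths_def pre_digraph.apath_def pre_digraph.awalk_def)
  then show "f e \<in> V" by (rule assms(2))
qed

lemma polynomial_fun_coeff_loop_numerator: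
  assumes "fin_digraph G"
  shows "polynomial_fun (Inl ` {..s} \<union> Inr ` arcs G) (\<lambda>x.
    coeff (monom 1 b * (NC_poly s (\<lambda>i. x (Inl i)) * NG_poly G u v dl (\<lambda>e. x (Inr e)) * NP)) j)"
proof -
  have "finite (Inl ` {..s} \<union> Inr ` arcs G)"
    using fin_digraph.finite_arcs[OF assms] by simp
  then show ?thesis
    unfolding coeff_monom_mult
    by (intro polynomial_fun_If polynomial_fun_const polynomial_fun_mult polynomial_fun_coeff_mult
        polynomial_fun_coeff_NC_poly polynomial_fun_coeff_NG_poly) auto
qed

lemma degree_loop_numerator_le:
  assumes "degree NP \<le> n"
  shows "degree (monom 1 b * (NC_poly s d * NG_poly G u v dl W * NP)) \<le> b + (s + max_delay G u v dl + n)"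
proof -
  have "degree (NC_poly s d * NG_poly G u v dl W * NP) \<le> s + max_delay G u v dl + n"
    using degree_mult_le[of "NC_poly s d * NG_poly G u v dl W" NP]
      degree_mult_le[of "NC_poly s d" "NG_poly G u v dl W"]
      degree_NC_poly_le[of s d] degree_NG_poly_le[of G u v dl W] assms
    by linarith
  then show ?thesis
    by (rule order_trans[OF degree_mult_le add_mono[OF degree_monom_le]])
qed

lemma map_poly_of_real_mult:
  "map_poly of_real (p * q) = map_poly of_real p * (map_poly of_real q :: 'a::{real_algebra_1,comm_ring} poly)"
  by (rule poly_eqI) (simp add: coeff_map_poly coeff_mult of_real_sum)

lemma map_poly_of_real_add:
  "map_poly of_real (p + q) = map_poly of_real p + (map_poly of_real q :: 'a::real_algebra_1 poly)"
  by (rule poly_eqI) (simp add: coeff_map_poly)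

lemma cpoly_mult: "cpoly (p * q) z = cpoly p z * cpoly q z"
  by (simp add: cpoly_def map_poly_of_real_mult)

lemma cpoly_add: "cpoly (p + q) z = cpoly p z + cpoly q z"
  by (simp add: cpoly_def map_poly_of_real_add)

lemma cpoly_monom: "cpoly (monom c k) z = of_real c * z ^ k"
  by (simp add: cpoly_def map_poly_monom poly_monom)

lemma eventually_cpoly_nonzero_at_infinity:
  assumes "p \<noteq> 0"
  shows "eventually (\<lambda>z. cpoly p z \<noteq> 0) at_infinity"
proof -
  have "map_poly complex_of_real p \<noteq> 0" using assms by (subst map_poly_eq_0_iff) auto
  then have "bounded {z. cpoly p z = 0}"
    unfolding cpoly_def by (intro finite_imp_bounded poly_roots_finite)
  then obtain B where "\<forall>z\<in>{z. cpoly p z = 0}. norm z \<le> B"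
    unfolding bounded_iff by blast
  then show ?thesis
    unfolding eventually_at_infinity by (intro exI[of _ "B + 1"]) force
qed


lemma powser_coeff_eq_0_if_sums_0_at_0:
  fixes a :: "nat \<Rightarrow> 'a::{real_normed_field,banach}"
  assumes "eventually (\<lambda>w. (\<lambda>k. a k * w ^ k) sums 0) (at 0)"
  shows "a k = 0"
proof -
  obtain r where r: "r > 0" and zero: "\<And>w. w \<noteq> 0 \<Longrightarrow> norm w < r \<Longrightarrow> (\<lambda>k. a k * w ^ k) sums 0"
    using assms unfolding eventually_at by (auto simp: dist_norm)
  show ?thesis
  proof (induction k rule: less_induct)
    case (less k)
    define f where "f w = (\<Sum>j. a (j + k) * w ^ j)" for w
    have tail: "(\<lambda>j. a (j + k) * w ^ j) sums 0" if "w \<noteq> 0" "norm w < r" for w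
    proof -
      have "(\<lambda>j. a (j + k) * w ^ (j + k)) sums 0"
        using zero[OF that] less sums_iff_shift[of "\<lambda>j. a j * w ^ j" k 0] by simp
      then have "(\<lambda>j. a (j + k) * w ^ (j + k) / w ^ k) sums 0"
        using sums_divide by fastforce
      then show ?thesis using \<open>w \<noteq> 0\<close> by (simp add: power_add)
    qed
    define w0 :: 'a where "w0 = of_real (r / 2)"
    have w0: "w0 \<noteq> 0" "norm w0 < r" using r by (auto simp: w0_def)
    have "isCont f 0"
      unfolding f_def by (rule isCont_powser[OF sums_summable[OF tail[OF w0]]]) (use w0 in simp)
    moreover have "eventually (\<lambda>w. f w = 0) (at 0)"
      unfolding eventually_at using r
      by (intro exI[of _ r]) (auto simp: f_def dist_norm intro!: sums_unique[symmetric] tail)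
    ultimately have "f 0 = 0"
      unfolding isCont_def using tendsto_eventually tendsto_unique trivial_limit_at by blast
    then show ?case by (simp add: f_def powser_zero[of "\<lambda>j. a (j + k)", simplified])
  qed
qed

lemma has_ztransform_unique:
  assumes "has_ztransform x X" "has_ztransform x' X'"
    and "eventually (\<lambda>z. X z = X' z) at_infinity"
  shows "x = x'"
proof
  fix k
  have "eventually (\<lambda>z. (\<lambda>k. complex_of_real (x k) / z ^ k) sums X z) at_infinity"
    "eventually (\<lambda>z. (\<lambda>k. complex_of_real (x' k) / z ^ k) sums X' z) at_infinity"
    using assms(1,2) unfolding has_ztransform_def eventually_at_infinity
    by (meson gt_ex less_le_trans)+
  with assms(3) have "eventually (\<lambda>z. (\<lambda>k. complex_of_real (x k - x' k) * inverse z ^ k) sums 0) at_infinity"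
  proof eventually_elim
    case (elim z)
    then have "(\<lambda>k. complex_of_real (x k) / z ^ k - complex_of_real (x' k) / z ^ k) sums 0"
      using sums_diff by fastforce
    then show ?case by (simp add: left_diff_distrib divide_inverse power_inverse)
  qed
  then have "eventually (\<lambda>w. (\<lambda>k. complex_of_real (x k - x' k) * w ^ k) sums 0) (at 0)"
    by (simp add: at_to_infinity eventually_filtermap)
  then show "x k = x' k"
    using powser_coeff_eq_0_if_sums_0_at_0 by fastforce
qed

lemma has_ztransform_cmult:
  assumes "has_ztransform x X"
  shows "has_ztransform (\<lambda>k. c * x k) (\<lambda>z. of_real c * X z)"
proof -
  obtain \<rho> where "\<forall>z. norm z > \<rho> \<longrightarrow> (\<lambda>k. complex_of_real (x k) / z ^ k) sums X z"
    using assms unfolding has_ztransform_def by blast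
  then have "\<forall>z. norm z > \<rho> \<longrightarrow> (\<lambda>k. of_real c * (complex_of_real (x k) / z ^ k)) sums (of_real c * X z)"
    using sums_mult by blast
  then show ?thesis unfolding has_ztransform_def by (auto simp: mult.assoc)
qed

lemma cpoly_div_power_eq_sum:
  assumes "degree F \<le> l" "z \<noteq> 0"
  shows "cpoly F z / z ^ l = (\<Sum>j\<le>l. of_real (coeff F (l - j)) / z ^ j)"
proof -
  have "cpoly F z = (\<Sum>i\<le>degree F. of_real (coeff F i) * z ^ i)"
    by (simp add: cpoly_def poly_altdef coeff_map_poly degree_map_poly)
  also have "\<dots> = (\<Sum>i\<le>l. of_real (coeff F i) * z ^ i)"
    using assms(1) by (intro sum.mono_neutral_left) (auto simp: coeff_eq_0)
  also have "\<dots> = (\<Sum>j\<le>l. of_real (coeff F (l - j)) * z ^ (l - j))"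
    using sum.atLeastAtMost_rev[of "\<lambda>i. of_real (coeff F i) * z ^ i" 0 l]
    by (simp add: atLeast0AtMost)
  finally show ?thesis
    using assms(2) by (simp add: sum_divide_distrib power_diff)
qed

text \<open>The response to a unit step of the causal filter with transfer function \<open>F(z)/z^l\<close>,
  whose impulse response is \<open>coeff F (l - j)\<close> at time \<open>j \<le> l\<close>.\<close>
definition step_response :: "real poly \<Rightarrow> nat \<Rightarrow> nat \<Rightarrow> real" where
  "step_response F l k = (\<Sum>j\<le>k. if j \<le> l then coeff F (l - j) else 0)"

lemma step_response_eq_final: "l \<le> k \<Longrightarrow> step_response F l k = step_response F l l"
  unfolding step_response_def by (intro sum.mono_neutral_right) auto

lemma polynomial_fun_step_response:
  assumes "\<And>i. polynomial_fun V (\<lambda>x. coeff (F x) i)"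
  shows "polynomial_fun V (\<lambda>x. step_response (F x) l k)"
  unfolding step_response_def
  by (intro polynomial_fun_sum polynomial_fun_If assms polynomial_fun_const)

lemma has_ztransform_step_response:
  assumes "degree F \<le> l"
  shows "has_ztransform (step_response F l) (\<lambda>z. z * cpoly F z / (z ^ l * (z - 1)))"
  unfolding has_ztransform_def
proof (intro exI[of _ 1] allI impI)
  fix z :: complex assume z: "1 < norm z"
  define w where "w = inverse z"
  have w: "norm w < 1" and z0: "z \<noteq> 0" "z \<noteq> 1"
    using z by (auto simp: w_def norm_inverse inverse_less_1_iff)
  define a where "a j = of_real (if j \<le> l then coeff F (l - j) else 0) * w ^ j" for j
  have a_summable: "summable (\<lambda>j. norm (a j))"
    by (rule summable_finite[of "{..l}"]) (auto simp: a_def)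
  have geom_summable: "summable (\<lambda>k. norm (w ^ k))"
    using w by (simp add: norm_power summable_geometric)
  have "(\<lambda>k. \<Sum>i\<le>k. a i * w ^ (k - i)) sums ((\<Sum>j. a j) * (\<Sum>k. w ^ k))"
    by (rule Cauchy_product_sums[OF a_summable geom_summable])
  moreover have "(\<Sum>i\<le>k. a i * w ^ (k - i)) = of_real (step_response F l k) / z ^ k" for k
  proof -
    have "(\<Sum>i\<le>k. a i * w ^ (k - i)) = (\<Sum>i\<le>k. of_real (if i \<le> l then coeff F (l - i) else 0) * w ^ k)"
      by (intro sum.cong refl) (simp add: a_def mult.assoc power_add[symmetric])
    then show ?thesis
      by (simp add: step_response_def sum_distrib_right of_real_sum w_def power_inverse divide_inverse)
  qed
  moreover have "(\<Sum>j. a j) = (\<Sum>j\<le>l. a j)"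
    by (rule suminf_finite) (auto simp: a_def)
  moreover have "(\<Sum>j\<le>l. a j) = cpoly F z / z ^ l"
    unfolding cpoly_div_power_eq_sum[OF assms z0(1)]
    by (intro sum.cong refl) (simp add: a_def w_def power_inverse divide_inverse)
  moreover have "(\<Sum>k. w ^ k) = z / (z - 1)"
    using suminf_geometric[OF w] z0 by (simp add: w_def field_simps)
  ultimately show "(\<lambda>k. of_real (step_response F l k) / z ^ k) sums (z * cpoly F z / (z ^ l * (z - 1)))"
    by (simp add: field_simps)
qed

lemma sums_square_if_eventually_const_tendsto_0:
  fixes e :: "nat \<Rightarrow> real"
  assumes const: "\<And>k. l \<le> k \<Longrightarrow> e k = e l" and lim: "e \<longlonglongrightarrow> 0"
  shows "(\<lambda>k. (e k)\<^sup>2) sums (\<Sum>k<l. (e k)\<^sup>2)"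
proof (rule sums_finite)
  have "eventually (\<lambda>k. e k = e l) sequentially"
    unfolding eventually_sequentially using const by blast
  then have "e \<longlonglongrightarrow> e l" by (rule tendsto_eventually)
  then have "e l = 0" using lim LIMSEQ_unique by blast
  then show "(e k)\<^sup>2 = 0" if "k \<notin> {..<l}" for k using const[of k] that by simp
qed simp

lemma closed_loop_output_deadbeat:
  fixes M DP DC NC NGR NP NGO :: "real poly" and z :: complex
  assumes deadbeat: "DC * DP + NC * NGR * NP * NGO = monom 1 l"
    and nonzero: "cpoly M z \<noteq> 0" "cpoly DP z \<noteq> 0" "cpoly DC z \<noteq> 0" "z \<noteq> 0" "z \<noteq> 1"
  shows "(cpoly M z * z ^ a * z ^ b * (cpoly NC z / cpoly DC z)) * (cpoly NGR z / z ^ a) *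
      (cpoly NP z / (cpoly M z * cpoly DP z)) /
      (1 + (cpoly M z * z ^ a * z ^ b * (cpoly NC z / cpoly DC z)) * (cpoly NGR z / z ^ a) *
        (cpoly NP z / (cpoly M z * cpoly DP z)) * (cpoly NGO z / z ^ b)) *
      (of_real A * z / (z - 1))
    = of_real A * (z * cpoly (monom 1 b * (NC * NGR * NP)) z / (z ^ l * (z - 1)))"
proof -
  have char: "cpoly DC z * cpoly DP z + cpoly NC z * cpoly NGR z * cpoly NP z * cpoly NGO z = z ^ l"
    using arg_cong[OF deadbeat, of "\<lambda>p. cpoly p z"] by (simp add: cpoly_mult cpoly_add cpoly_monom)
  have open_loop: "(cpoly M z * z ^ a * z ^ b * (cpoly NC z / cpoly DC z)) * (cpoly NGR z / z ^ a) *
      (cpoly NP z / (cpoly M z * cpoly DP z))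
    = z ^ b * (cpoly NC z * cpoly NGR z * cpoly NP z) / (cpoly DC z * cpoly DP z)"
    using nonzero by (simp add: field_simps)
  have return_difference:
    "1 + z ^ b * (cpoly NC z * cpoly NGR z * cpoly NP z) / (cpoly DC z * cpoly DP z) * (cpoly NGO z / z ^ b)
    = z ^ l / (cpoly DC z * cpoly DP z)"
    using nonzero char[symmetric] by (simp add: field_simps)
  show ?thesis
    unfolding open_loop return_difference using nonzero
    by (simp add: cpoly_mult cpoly_monom field_simps)
qed

lemma deadbeat_tracking_error_sums:
  fixes M DP DC NC NGR NP NGO :: "real poly"
  assumes deadbeat: "DC * DP + NC * NGR * NP * NGO = monom 1 l"
    and nonzero: "M \<noteq> 0" "DP \<noteq> 0" "DC \<noteq> 0"
    and degree: "degree (monom 1 b * (NC * NGR * NP)) \<le> l"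
    and response: "has_ztransform y (\<lambda>z.
      (cpoly M z * z ^ a * z ^ b * (cpoly NC z / cpoly DC z)) * (cpoly NGR z / z ^ a) *
      (cpoly NP z / (cpoly M z * cpoly DP z)) /
      (1 + (cpoly M z * z ^ a * z ^ b * (cpoly NC z / cpoly DC z)) * (cpoly NGR z / z ^ a) *
        (cpoly NP z / (cpoly M z * cpoly DP z)) * (cpoly NGO z / z ^ b)) *
      (of_real A * z / (z - 1)))" (is "has_ztransform y ?Y")
    and lim: "(\<lambda>k. y k - A) \<longlonglongrightarrow> 0"
  shows "(\<lambda>k. (y k - A)\<^sup>2) sums
    (\<Sum>k<l. (A * step_response (monom 1 b * (NC * NGR * NP)) l k - A)\<^sup>2)"
proof -
  define F where "F = monom 1 b * (NC * NGR * NP)"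
  have far: "eventually (\<lambda>z :: complex. z \<noteq> 0) at_infinity" "eventually (\<lambda>z :: complex. z \<noteq> 1) at_infinity"
    unfolding eventually_at_infinity by (intro exI[of _ 2]; auto)+
  have "eventually (\<lambda>z. cpoly M z \<noteq> 0 \<and> cpoly DP z \<noteq> 0 \<and> cpoly DC z \<noteq> 0 \<and> z \<noteq> 0 \<and> z \<noteq> 1)
      at_infinity"
    by (intro eventually_conj eventually_cpoly_nonzero_at_infinity nonzero far)
  then have "eventually (\<lambda>z. ?Y z = of_real A * (z * cpoly F z / (z ^ l * (z - 1)))) at_infinity"
  proof eventually_elim
    case (elim z)
    then show ?case
      unfolding F_def by (intro closed_loop_output_deadbeat[OF deadbeat]) simp_all
  qed
  then have y: "y = (\<lambda>k. A * step_response F l k)"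
    using has_ztransform_unique[OF response has_ztransform_cmult[OF has_ztransform_step_response]]
      degree by (simp add: F_def)
  with lim have "(\<lambda>k. A * step_response F l k - A) \<longlonglongrightarrow> 0" by simp
  then have "(\<lambda>k. (A * step_response F l k - A)\<^sup>2) sums (\<Sum>k<l. (A * step_response F l k - A)\<^sup>2)"
    by (rule sums_square_if_eventually_const_tendsto_0[rotated]) (metis step_response_eq_final)
  then show ?thesis by (simp add: y F_def)
qed

theorem proposition1:
  fixes NP DP M :: "real poly"
    and n r m s :: nat
    and A :: real
    and GR :: "('a, 'b) pre_digraph" and vc vu :: 'a and dR :: "'b list \<Rightarrow> nat"
    and GO :: "('c, 'e) pre_digraph" and vy vc' :: 'c and dO :: "'e list \<Rightarrow> nat"
  assumes DP_monic: "degree DP = r" "lead_coeff DP = 1"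
    and M_monic: "lead_coeff M = 1"
    and n_def: "r + degree M = n"
    and NP_deg: "\<forall>i\<ge>n. coeff NP i = 0"
    and GR_graph: "fin_digraph GR" "acyclic_net GR" "vc \<in> verts GR" "vu \<in> verts GR"
    and GO_graph: "fin_digraph GO" "acyclic_net GO" "vy \<in> verts GO" "vc' \<in> verts GO"
    and dims: "m + 1 = s + degree M + max_delay GR vc vu dR + max_delay GO vy vc' dO"
  shows "\<exists>Q. polynomial_fun (Inl ` {..s} \<union> Inr ` arcs GR) Q \<and>
    (\<forall>(c :: nat \<Rightarrow> real) (d :: nat \<Rightarrow> real) (wR :: 'b \<Rightarrow> real) (wO :: 'e \<Rightarrow> real)
       (y :: nat \<Rightarrow> real).
      let DRb = max_delay GR vc vu dR; DOb = max_delay GO vy vc' dO;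
          NGR = NG_poly GR vc vu dR wR; NGO = NG_poly GO vy vc' dO wO;
          NC = NC_poly s d; DC = DC_poly m c;
          P = (\<lambda>z. cpoly NP z / (cpoly M z * cpoly DP z));
          C = (\<lambda>z. cpoly M z * z ^ DRb * z ^ DOb * (cpoly NC z / cpoly DC z));
          G_R = (\<lambda>z. cpoly NGR z / z ^ DRb);
          G_O = (\<lambda>z. cpoly NGO z / z ^ DOb);
          R = (\<lambda>z. complex_of_real A * z / (z - 1));
          Y = (\<lambda>z. C z * G_R z * P z / (1 + C z * G_R z * P z * G_O z) * R z)
      in (DC * DP + NC * NGR * NP * NGO = monom 1 (m + r + 1)
          \<and> has_ztransform y Y
          \<and> (\<lambda>k. y k - A) \<longlonglongrightarrow> 0)
         \<longrightarrow> (\<lambda>k. (y k - A)\<^sup>2) sums Q (\<lambda>v. case v of Inl i \<Rightarrow> d i | Inr e \<Rightarrow> wR e))"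
proof -
  let ?DR = "max_delay GR vc vu dR" and ?DO = "max_delay GO vy vc' dO"
  define F where "F x = monom 1 ?DO *
    (NC_poly s (\<lambda>i. x (Inl i)) * NG_poly GR vc vu dR (\<lambda>e. x (Inr e)) * NP)" for x :: "nat + 'b \<Rightarrow> real"
  define Q where "Q x = (\<Sum>k<m + r + 1. (A * step_response (F x) (m + r + 1) k - A)\<^sup>2)" for x
  have polynomial: "polynomial_fun (Inl ` {..s} \<union> Inr ` arcs GR) Q"
    unfolding Q_def F_def power2_eq_square
    by (intro polynomial_fun_sum polynomial_fun_mult polynomial_fun_diff polynomial_fun_const
        polynomial_fun_step_response polynomial_fun_coeff_loop_numerator GR_graph(1))
  have "degree NP \<le> n" using NP_deg by (intro degree_le) auto
  then have degree: "degree (F x) \<le> m + r + 1" for x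
    using degree_loop_numerator_le[of NP n ?DO s "\<lambda>i. x (Inl i)" GR vc vu dR "\<lambda>e. x (Inr e)"]
      dims n_def
    unfolding F_def by linarith
  have nonzero: "M \<noteq> 0" "DP \<noteq> 0" using M_monic DP_monic by auto
  show ?thesis
    unfolding Let_def
    apply (intro exI[of _ Q] conjI allI impI; (elim conjE)?)
    subgoal by (rule polynomial)
    subgoal premises closed_loop for c d wR wO y
      using closed_loop(1) nonzero DC_poly_nonzero degree[of "case_sum d wR", unfolded F_def sum.case]
        closed_loop(2,3)
      unfolding Q_def F_def sum.case
      by (rule deadbeat_tracking_error_sums)
    done
qed

end
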